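(* Let $f:\{0,1\}^n\to\{0,1\}$ be a read-once DNF formula with $m$ terms, each containing exactly $n/m$ variables (so every variable occurs in exactly one term). Under unit costs ($c_i=1$ for all $i$) and an arbitrary probability vector $p\in(0,1)^n$, there is a non-adaptive strategy $S$ with $$\mathrm{cost}_{c,p}(f,S)\le \frac{n}{m}\cdot \mathsf{OPT}_{\mathcal A}(f,c,p).$$
   Context: Stochastic Boolean Function Evaluation (SBFE) setup: $f:\{0,1\}^n\to\{0,1\}$ is a known Boolean function, $c\in\mathbb{R}_{>0}^n$ a cost vector and $p\in(0,1)^n$ a probability vector. The unknown input $x\in\{0,1\}^n$ is random with independent coordinates and $\Pr(x_i=1)=p_i$. The value $x_i$ can only be learned by testing variable $i$, at cost $c_i$. A strategy tests variables sequentially until $f(x)$ is determined, i.e. until $f(x')=f(x)$ for every $x'$ agreeing with $x$ on all tested coordinates. An adaptive strategy is a decision tree (the next test may depend on previous outcomes); a non-adaptive strategy is a fixed permutation of $[n]$, with variables tested in that order until $f(x)$ is determined. $\mathrm{cost}_{c,p}(f,S)$ is the expected total cost of tests performed by $S$ for random $x$. $\mathsf{OPT}_{\mathcal A}(f,c,p)$ (resp. $\mathsf{OPT}_{\mathcal N}(f,c,p)$) is the minimum of $\mathrm{cost}_{c,p}(f,S)$ over all adaptive (resp. non-adaptive) strategies. A DNF formula is a disjunction of terms, each a conjunction of literals; it is read-once if no variable is negated and distinct terms contain disjoint sets of variables. *)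

theory Defs
  imports Complex_Main
begin

text \<open>Inputs in {0,1}^n are represented as functions nat \<Rightarrow> bool that are False
  outside {..<n}; a Boolean function is f :: (nat \<Rightarrow> bool) \<Rightarrow> bool, only
  its values on the cube matter.\<close>

definition cube :: "nat \<Rightarrow> (nat \<Rightarrow> bool) set" where
  "cube n = {x. \<forall>i. n \<le> i \<longrightarrow> \<not> x i}"

definition prob_input :: "nat \<Rightarrow> (nat \<Rightarrow> real) \<Rightarrow> (nat \<Rightarrow> bool) \<Rightarrow> real" where
  "prob_input n p x = (\<Prod>i<n. if x i then p i else 1 - p i)"

definition determined :: "nat \<Rightarrow> ((nat \<Rightarrow> bool) \<Rightarrow> bool) \<Rightarrow> nat set \<Rightarrow> (nat \<Rightarrow> bool) \<Rightarrow> bool" where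
  "determined n f S x \<longleftrightarrow> (\<forall>x' \<in> cube n. (\<forall>i\<in>S. x' i = x i) \<longrightarrow> f x' = f x)"

text \<open>Adaptive strategies: decision trees. Node i l r tests variable i, continues
  with l if x_i = 0 and with r if x_i = 1.\<close>
datatype dtree = Leaf | Node nat dtree dtree

fun tested :: "dtree \<Rightarrow> (nat \<Rightarrow> bool) \<Rightarrow> nat list" where
  "tested Leaf x = []"
| "tested (Node i l r) x = i # tested (if x i then r else l) x"

definition valid_tree :: "nat \<Rightarrow> ((nat \<Rightarrow> bool) \<Rightarrow> bool) \<Rightarrow> dtree \<Rightarrow> bool" where
  "valid_tree n f T \<longleftrightarrow> (\<forall>x \<in> cube n. set (tested T x) \<subseteq> {..<n}
       \<and> determined n f (set (tested T x)) x)"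

definition tree_cost :: "nat \<Rightarrow> (nat \<Rightarrow> real) \<Rightarrow> (nat \<Rightarrow> real) \<Rightarrow> dtree \<Rightarrow> real" where
  "tree_cost n c p T = (\<Sum>x\<in>cube n. prob_input n p x * sum_list (map c (tested T x)))"

definition OPT_A :: "nat \<Rightarrow> ((nat \<Rightarrow> bool) \<Rightarrow> bool) \<Rightarrow> (nat \<Rightarrow> real) \<Rightarrow> (nat \<Rightarrow> real) \<Rightarrow> real" where
  "OPT_A n f c p = Inf {tree_cost n c p T | T. valid_tree n f T}"

text \<open>Non-adaptive strategies: permutations of [n] given as lists; variables are
  tested in that order until f(x) is determined.\<close>
definition is_perm :: "nat \<Rightarrow> nat list \<Rightarrow> bool" where
  "is_perm n \<sigma> \<longleftrightarrow> distinct \<sigma> \<and> set \<sigma> = {..<n}"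

definition stop_time :: "nat \<Rightarrow> ((nat \<Rightarrow> bool) \<Rightarrow> bool) \<Rightarrow> nat list \<Rightarrow> (nat \<Rightarrow> bool) \<Rightarrow> nat" where
  "stop_time n f \<sigma> x = (LEAST t. determined n f (set (take t \<sigma>)) x)"

definition perm_cost :: "nat \<Rightarrow> ((nat \<Rightarrow> bool) \<Rightarrow> bool) \<Rightarrow> (nat \<Rightarrow> real) \<Rightarrow> (nat \<Rightarrow> real) \<Rightarrow> nat list \<Rightarrow> real" where
  "perm_cost n f c p \<sigma> = (\<Sum>x\<in>cube n. prob_input n p x *
       sum_list (map c (take (stop_time n f \<sigma> x) \<sigma>)))"

text \<open>Read-once DNF with m terms T 0, ..., T (m-1), each of exactly k variables,
  partitioning {..<n} (every variable occurs in exactly one term).\<close>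
definition read_once_dnf :: "nat \<Rightarrow> nat \<Rightarrow> (nat \<Rightarrow> nat set) \<Rightarrow> (nat \<Rightarrow> bool) \<Rightarrow> bool" where
  "read_once_dnf n m T x \<longleftrightarrow> (\<exists>j<m. \<forall>i\<in>T j. x i)"

end

theory Submission
  imports Defs
begin

text \<open>Let \<open>q\<^sub>j\<close> be the probability that term \<open>j\<close> is satisfied and let \<open>W\<close> be the expected number
  of terms examined when the terms are inspected in order of decreasing \<open>q\<^sub>j\<close>, each as a single
  coin of bias \<open>q\<^sub>j\<close>, until one comes up heads. Testing the terms in this order, each of them
  completely, is a non-adaptive strategy of cost at most \<open>k \<cdot> W\<close>. Conversely, a decision tree
  touches the terms one at a time; as long as a term is untouched its variables are still
  independent with satisfaction probability \<open>q\<^sub>j\<close>, and since the greedy order is optimal for coins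
  (an exchange argument), the expected number of terms touched, hence the cost, is at least \<open>W\<close>.\<close>

lemma finite_cube: "finite (cube n)"
proof -
  have "cube n \<subseteq> (\<lambda>S i. i \<in> S) ` Pow {..<n}"
  proof
    fix x assume "x \<in> cube n"
    hence "{i. x i} \<subseteq> {..<n}" unfolding cube_def using not_le by auto
    moreover have "x = (\<lambda>i. i \<in> {i. x i})" by auto
    ultimately show "x \<in> (\<lambda>S i. i \<in> S) ` Pow {..<n}" by blast
  qed
  thus ?thesis by (rule finite_subset) auto
qed

lemma cube_eqI: "x \<in> cube n \<Longrightarrow> x' \<in> cube n \<Longrightarrow> (\<And>i. i < n \<Longrightarrow> x' i = x i) \<Longrightarrow> x' = x"
proof
  fix i assume "x \<in> cube n" "x' \<in> cube n" "\<And>i. i < n \<Longrightarrow> x' i = x i"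
  thus "x' i = x i" unfolding cube_def by (cases "i < n") auto
qed

lemma tested_full_tree: "tested (foldr (\<lambda>i t. Node i t t) xs Leaf) x = xs"
  by (induction xs) auto

lemma valid_tree_exists: "\<exists>t. valid_tree n f t"
proof
  show "valid_tree n f (foldr (\<lambda>i t. Node i t t) [0..<n] Leaf)"
    unfolding valid_tree_def tested_full_tree determined_def
    by (metis atLeastLessThan_iff cube_eqI le0 lessThan_iff set_upt subsetI)
qed

section \<open>Expectations over the cube\<close>

text \<open>The parameters \<open>p i\<close> are allowed to be \<open>0\<close> or \<open>1\<close>: updating \<open>p i\<close> to \<open>of_bool b\<close>
  conditions on the outcome \<open>x i = b\<close> of a test.\<close>

definition expect :: "nat \<Rightarrow> (nat \<Rightarrow> real) \<Rightarrow> ((nat \<Rightarrow> bool) \<Rightarrow> real) \<Rightarrow> real" where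
  "expect n p g = (\<Sum>x\<in>cube n. prob_input n p x * g x)"

lemma prob_input_nonneg: "(\<And>i. i < n \<Longrightarrow> 0 \<le> p i \<and> p i \<le> 1) \<Longrightarrow> 0 \<le> prob_input n p x"
  unfolding prob_input_def by (rule prod_nonneg) auto

lemma prob_input_cond_eq_0: "i < n \<Longrightarrow> x i \<noteq> b \<Longrightarrow> prob_input n (p(i := of_bool b)) x = 0"
  unfolding prob_input_def by (rule prod_zero) auto

lemma prob_input_split:
  assumes "i < n"
  shows "prob_input n p x = p i * prob_input n (p(i:=1)) x + (1 - p i) * prob_input n (p(i:=0)) x"
proof -
  have rest: "(\<Prod>j\<in>{..<n}-{i}. if x j then (p(i:=c)) j else 1 - (p(i:=c)) j)
      = (\<Prod>j\<in>{..<n}-{i}. if x j then p j else 1 - p j)" for c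
    by (rule prod.cong) auto
  have remove: "prob_input n q x = (if x i then q i else 1 - q i) *
      (\<Prod>j\<in>{..<n}-{i}. if x j then q j else 1 - q j)" for q
    unfolding prob_input_def using assms by (subst prod.remove[of _ i]) auto
  show ?thesis unfolding remove[of p] remove[of "p(i:=1)"] remove[of "p(i:=0)"] rest
    by (cases "x i") (auto simp: algebra_simps)
qed

lemma prob_input_cond:
  "i < n \<Longrightarrow> prob_input n p x = (if x i then p i else 1 - p i) * prob_input n (p(i := of_bool (x i))) x"
  using prob_input_split[of i n p x] prob_input_cond_eq_0[of i n x True p]
    prob_input_cond_eq_0[of i n x False p]
  by (cases "x i") auto

lemma prob_input_cond_neq_0:
  assumes "i < n" "prob_input n (p(i := of_bool b)) x \<noteq> 0" "(if b then p i else 1 - p i) \<noteq> 0"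
  shows "x i = b" "prob_input n p x \<noteq> 0"
proof -
  show "x i = b" using prob_input_cond_eq_0[OF assms(1)] assms(2) by blast
  thus "prob_input n p x \<noteq> 0" using prob_input_cond[OF assms(1), of p x] assms(2,3) by simp
qed

lemma expect_split:
  "i < n \<Longrightarrow> expect n p g = p i * expect n (p(i:=1)) g + (1 - p i) * expect n (p(i:=0)) g"
  unfolding expect_def sum_distrib_left sum.distrib[symmetric]
  by (rule sum.cong) (auto simp: prob_input_split[of i n p] algebra_simps)

lemma expect_cong_support:
  "(\<And>x. x \<in> cube n \<Longrightarrow> prob_input n p x \<noteq> 0 \<Longrightarrow> g x = h x) \<Longrightarrow> expect n p g = expect n p h"
  unfolding expect_def by (rule sum.cong) auto

lemma expect_add: "expect n p (\<lambda>x. f x + g x) = expect n p f + expect n p g"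
  unfolding expect_def by (simp add: algebra_simps sum.distrib)

lemma expect_diff: "expect n p (\<lambda>x. f x - g x) = expect n p f - expect n p g"
  unfolding expect_def by (simp add: algebra_simps sum_subtractf)

lemma expect_cmult: "expect n p (\<lambda>x. c * f x) = c * expect n p f"
  unfolding expect_def by (simp add: algebra_simps sum_distrib_left)

lemma expect_mono:
  "(\<And>i. i < n \<Longrightarrow> 0 \<le> p i \<and> p i \<le> 1) \<Longrightarrow> (\<And>x. x \<in> cube n \<Longrightarrow> f x \<le> g x) \<Longrightarrow>
   expect n p f \<le> expect n p g"
  unfolding expect_def by (intro sum_mono mult_left_mono) (auto simp: prob_input_nonneg)

lemma expect_cond_1_eq_cond_0:
  assumes "i < n" and indep: "\<And>x b. g (x(i:=b)) = g x"
  shows "expect n (p(i:=1)) g = expect n (p(i:=0)) g"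
  unfolding expect_def
proof (rule sum.reindex_bij_witness[of _ "\<lambda>x. x(i:= \<not> x i)" "\<lambda>x. x(i:= \<not> x i)"])
  fix x assume "x \<in> cube n"
  have "prob_input n (p(i := 0)) (x(i := \<not> x i)) = prob_input n (p(i := 1)) x"
    unfolding prob_input_def by (rule prod.cong) auto
  thus "prob_input n (p(i:=0)) (x(i := \<not> x i)) * g (x(i := \<not> x i)) = prob_input n (p(i:=1)) x * g x"
    using indep by simp
qed (use assms in \<open>auto simp: cube_def\<close>)

lemma expect_update_indep:
  assumes "i < n" and indep: "\<And>x b. g (x(i:=b)) = g x"
  shows "expect n (p(i:=c)) g = expect n p g"
proof -
  have "expect n (p(i:=c)) g = c * expect n (p(i:=1)) g + (1 - c) * expect n (p(i:=0)) g"
    using expect_split[OF assms(1), of "p(i:=c)"] by simp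
  moreover have "expect n p g = p i * expect n (p(i:=1)) g + (1 - p i) * expect n (p(i:=0)) g"
    using expect_split[OF assms(1)] .
  ultimately show ?thesis using expect_cond_1_eq_cond_0[of i n g p, OF assms] by (simp add: algebra_simps)
qed

lemma expect_1: "expect n p (\<lambda>_. 1) = 1"
proof -
  have "expect n p (\<lambda>_. 1) = expect n (\<lambda>i. if i \<in> S then 0 else p i) (\<lambda>_. 1)"
    if "finite S" "S \<subseteq> {..<n}" for S
    using that
  proof (induction S rule: finite_induct)
    case (insert a S)
    have "(\<lambda>i. if i \<in> insert a S then 0 else p i) = (\<lambda>i. if i \<in> S then 0 else p i)(a := 0)"
      by auto
    then show ?case using insert expect_update_indep[of a n "\<lambda>_. 1"] by simp
  qed simp
  from this[of "{..<n}"]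
  have "expect n p (\<lambda>_. 1) = expect n (\<lambda>i. if i < n then 0 else p i) (\<lambda>_. 1)" by simp
  also have "\<dots> = (\<Sum>x\<in>cube n. if x = (\<lambda>_. False) then 1 else 0)"
    unfolding expect_def
  proof (rule sum.cong)
    fix x assume x: "x \<in> cube n"
    show "prob_input n (\<lambda>i. if i < n then 0 else p i) x * 1 = (if x = (\<lambda>_. False) then 1 else 0)"
    proof (cases "x = (\<lambda>_. False)")
      case False
      then obtain i where "x i" by auto
      with x have "i < n" unfolding cube_def using not_le by blast
      with \<open>x i\<close> False show ?thesis unfolding prob_input_def by (auto intro!: prod_zero)
    qed (simp add: prob_input_def)
  qed simp
  also have "\<dots> = 1" using finite_cube[of n] by (simp add: cube_def)
  finally show ?thesis .
qed

lemma expect_const: "expect n p (\<lambda>_. c) = c"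
  using expect_cmult[of n p c "\<lambda>_. 1"] expect_1 by simp

lemma expect_mult_indicator_all:
  assumes "finite S" "S \<subseteq> {..<n}" and indep: "\<And>i x b. i \<in> S \<Longrightarrow> g (x(i:=b)) = g x"
  shows "expect n p (\<lambda>x. g x * of_bool (\<forall>i\<in>S. x i)) = (\<Prod>i\<in>S. p i) * expect n p g"
  using assms
proof (induction S arbitrary: p rule: finite_induct)
  case (insert a S)
  have a: "a < n" using insert by auto
  let ?h = "\<lambda>S x. g x * of_bool (\<forall>i\<in>S. x i)"
  have "expect n p (?h (insert a S))
      = p a * expect n (p(a:=1)) (?h (insert a S)) + (1 - p a) * expect n (p(a:=0)) (?h (insert a S))"
    by (rule expect_split[OF a])
  also have "expect n (p(a:=0)) (?h (insert a S)) = 0"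
    using expect_cong_support[of n "p(a:=0)" "?h (insert a S)" "\<lambda>_. 0"]
      prob_input_cond_eq_0[OF a, of _ False p] by (auto simp: expect_const)
  also have "expect n (p(a:=1)) (?h (insert a S)) = expect n (p(a:=1)) (?h S)"
    by (rule expect_cong_support) (use prob_input_cond_eq_0[OF a, of _ True p] in auto)
  also have "\<dots> = (\<Prod>i\<in>S. (p(a:=1)) i) * expect n (p(a:=1)) g"
    by (rule insert.IH) (use insert.prems in auto)
  also have "(\<Prod>i\<in>S. (p(a:=1)) i) = (\<Prod>i\<in>S. p i)"
    using insert(2) by (intro prod.cong) auto
  also have "expect n (p(a:=1)) g = expect n p g"
    by (rule expect_update_indep[OF a]) (rule insert.prems(2), simp)
  finally show ?case using insert(1,2) by (simp add: mult.assoc)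
qed (simp add: expect_def)

section \<open>Testing coins in a fixed order\<close>

fun order_cost :: "('a \<Rightarrow> real) \<Rightarrow> 'a list \<Rightarrow> real" where
  "order_cost q [] = 0"
| "order_cost q (a # xs) = 1 + (1 - q a) * order_cost q xs"

lemma order_cost_nonneg: "(\<And>a. a \<in> set xs \<Longrightarrow> q a \<le> 1) \<Longrightarrow> 0 \<le> order_cost q xs"
  by (induction xs) auto

lemma order_cost_le_remove1:
  assumes "sorted_wrt (\<lambda>a b. q b \<le> q a) xs" and "\<And>a. a \<in> set xs \<Longrightarrow> 0 \<le> q a \<and> q a \<le> 1"
    and "j \<in> set xs"
  shows "order_cost q xs \<le> 1 + (1 - q j) * order_cost q (remove1 j xs)"
  using assms
proof (induction xs)
  case (Cons a ys)
  show ?case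
  proof (cases "a = j")
    case False
    hence j: "j \<in> set ys" using Cons by auto
    have "q j \<le> q a" "0 \<le> 1 - q a" "0 \<le> 1 - q j" using Cons j by auto
    moreover have "order_cost q ys \<le> 1 + (1 - q j) * order_cost q (remove1 j ys)"
      using Cons j by auto
    moreover have "0 \<le> order_cost q (remove1 j ys)"
      using Cons.prems(2) by (intro order_cost_nonneg) (use set_remove1_subset[of j ys] in auto)
    ultimately have "order_cost q (a # ys) \<le> 1 + (1 - q a) * (1 + (1 - q j) * order_cost q (remove1 j ys))"
      by (simp add: mult_left_mono)
    also have "\<dots> = 1 + (1 - q a) + (1 - q a) * (1 - q j) * order_cost q (remove1 j ys)"
      by (simp add: algebra_simps)
    also have "\<dots> \<le> 1 + (1 - q j) * (1 + (1 - q a) * order_cost q (remove1 j ys))"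
      using \<open>q j \<le> q a\<close> by (simp add: algebra_simps)
    finally show ?thesis using False by simp
  qed simp
qed simp

fun search_length :: "('a \<Rightarrow> bool) \<Rightarrow> 'a list \<Rightarrow> nat" where
  "search_length P [] = 0"
| "search_length P (a # xs) = Suc (if P a then 0 else search_length P xs)"

lemma search_length_found:
  "(\<exists>a\<in>set (take (search_length P xs) xs). P a) \<or> search_length P xs = length xs"
  by (induction xs) auto

lemma take_mult_concat_map:
  "(\<And>a. a \<in> set xs \<Longrightarrow> length (f a) = k) \<Longrightarrow>
   take (k * r) (concat (map f xs)) = concat (map f (take r xs))"
proof (induction xs arbitrary: r)
  case (Cons a xs)
  thus ?case by (cases r) simp_all
qed simp

section \<open>Read-once DNF with terms of equal size\<close>

locale uniform_read_once_dnf =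
  fixes n m k :: nat and T :: "nat \<Rightarrow> nat set" and p :: "nat \<Rightarrow> real"
  assumes n_eq: "n = m * k" and k_pos: "0 < k"
    and card_term: "\<And>j. j < m \<Longrightarrow> card (T j) = k"
    and disjoint_terms: "\<And>j j'. j < m \<Longrightarrow> j' < m \<Longrightarrow> j \<noteq> j' \<Longrightarrow> T j \<inter> T j' = {}"
    and Union_terms: "(\<Union>j<m. T j) = {..<n}"
    and p_bounds: "\<And>i. i < n \<Longrightarrow> 0 \<le> p i \<and> p i \<le> 1"
begin

abbreviation F :: "(nat \<Rightarrow> bool) \<Rightarrow> bool" where
  "F \<equiv> read_once_dnf n m T"

definition term_sat :: "nat \<Rightarrow> (nat \<Rightarrow> bool) \<Rightarrow> bool" where
  "term_sat j x \<longleftrightarrow> (\<forall>i\<in>T j. x i)"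

definition term_prob :: "nat \<Rightarrow> real" where
  "term_prob j = (\<Prod>i\<in>T j. p i)"

definition greedy_order :: "nat list" where
  "greedy_order = sort_key (\<lambda>j. - term_prob j) [0..<m]"

definition residual_cost :: "nat set \<Rightarrow> real" where
  "residual_cost U = order_cost term_prob (filter (\<lambda>j. j \<notin> U) greedy_order)"

definition no_term_sat :: "nat set \<Rightarrow> (nat \<Rightarrow> bool) \<Rightarrow> real" where
  "no_term_sat U x = of_bool (\<forall>j\<in>U. \<not> term_sat j x)"

definition touched_terms :: "nat list \<Rightarrow> nat set" where
  "touched_terms l = {j. j < m \<and> (\<exists>i\<in>set l. i \<in> T j)}"

definition term_of :: "nat \<Rightarrow> nat" where
  "term_of i = (THE j. j < m \<and> i \<in> T j)"

lemma no_term_sat_empty: "no_term_sat {} = (\<lambda>_. 1)"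
  unfolding no_term_sat_def by simp

lemma term_subset: "j < m \<Longrightarrow> T j \<subseteq> {..<n}"
  using Union_terms by blast

lemma finite_term: "j < m \<Longrightarrow> finite (T j)"
  using finite_subset[OF term_subset] by blast

lemma term_nonempty: "j < m \<Longrightarrow> T j \<noteq> {}"
  using card_term[of j] k_pos by auto

lemma term_of: assumes "i < n" shows "term_of i < m" "i \<in> T (term_of i)"
proof -
  obtain j where j: "j < m" "i \<in> T j" using assms Union_terms by blast
  have "\<exists>!j. j < m \<and> i \<in> T j"
    using j disjoint_terms by blast
  hence "term_of i < m \<and> i \<in> T (term_of i)" unfolding term_of_def by (rule theI')
  thus "term_of i < m" "i \<in> T (term_of i)" by auto
qed

lemma term_prob_bounds: "j < m \<Longrightarrow> 0 \<le> term_prob j \<and> term_prob j \<le> 1"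
  unfolding term_prob_def using term_subset p_bounds by (fastforce intro: prod_nonneg prod_le_1)

lemma distinct_greedy_order: "distinct greedy_order"
  unfolding greedy_order_def by simp

lemma set_greedy_order: "set greedy_order = {..<m}"
  unfolding greedy_order_def by auto

lemma sorted_greedy_order: "sorted_wrt (\<lambda>a b. term_prob b \<le> term_prob a) greedy_order"
proof -
  have "sorted (map (\<lambda>j. - term_prob j) greedy_order)"
    unfolding greedy_order_def by (rule sorted_sort_key)
  thus ?thesis by (simp add: sorted_map)
qed

lemma length_greedy_order: "length greedy_order = m"
  using distinct_card[OF distinct_greedy_order] set_greedy_order by simp

lemma expect_no_term_sat_insert:
  assumes j: "j < m" "j \<notin> U" and U: "U \<subseteq> {..<m}" and r: "\<forall>i\<in>T j. r i = p i"
  shows "expect n r (no_term_sat (insert j U)) = (1 - term_prob j) * expect n r (no_term_sat U)"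
proof -
  have indep: "no_term_sat U (x(i:=b)) = no_term_sat U x" if "i \<in> T j" for i x b
  proof -
    have "term_sat j' (x(i:=b)) = term_sat j' x" if "j' \<in> U" for j'
    proof -
      have "i \<notin> T j'" using disjoint_terms[of j j'] j U \<open>j' \<in> U\<close> \<open>i \<in> T j\<close> by auto
      thus ?thesis unfolding term_sat_def by auto
    qed
    thus ?thesis unfolding no_term_sat_def by simp
  qed
  have "no_term_sat (insert j U) = (\<lambda>x. no_term_sat U x - no_term_sat U x * of_bool (\<forall>i\<in>T j. x i))"
    unfolding no_term_sat_def term_sat_def by auto
  hence "expect n r (no_term_sat (insert j U))
      = expect n r (no_term_sat U) - (\<Prod>i\<in>T j. r i) * expect n r (no_term_sat U)"
    by (simp add: expect_diff expect_mult_indicator_all[OF finite_term[OF j(1)] term_subset[OF j(1)] indep])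
  also have "(\<Prod>i\<in>T j. r i) = term_prob j"
    unfolding term_prob_def using r by (intro prod.cong) auto
  finally show ?thesis by (simp add: algebra_simps)
qed

lemma expect_no_term_sat_bounds:
  assumes "\<And>i. i < n \<Longrightarrow> 0 \<le> r i \<and> r i \<le> 1"
  shows "0 \<le> expect n r (no_term_sat U)" "expect n r (no_term_sat U) \<le> 1"
  using expect_mono[where f="\<lambda>_. 0" and g="no_term_sat U", OF assms]
    expect_mono[where f="no_term_sat U" and g="\<lambda>_. 1", OF assms]
  by (auto simp: no_term_sat_def expect_const expect_1)

lemma card_touched_terms_le: "set l \<subseteq> {..<n} \<Longrightarrow> card (touched_terms l) \<le> length l"
proof -
  assume l: "set l \<subseteq> {..<n}"
  have "touched_terms l \<subseteq> term_of ` set l"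
  proof
    fix j assume "j \<in> touched_terms l"
    then obtain i where "j < m" "i \<in> set l" "i \<in> T j" unfolding touched_terms_def by auto
    moreover have "term_of i = j"
      using term_of[of i] disjoint_terms[of j "term_of i"] l calculation by blast
    ultimately show "j \<in> term_of ` set l" by blast
  qed
  hence "card (touched_terms l) \<le> card (term_of ` set l)" by (intro card_mono) auto
  also have "\<dots> \<le> length l" using card_image_le card_length le_trans by blast
  finally show ?thesis .
qed

lemma card_touched_terms_Cons:
  assumes "j < m" "i \<in> T j"
  shows "real (card (touched_terms (i # l) - U))
    = of_bool (j \<notin> U) + real (card (touched_terms l - insert j U))"
proof -
  have "touched_terms (i # l) = insert j (touched_terms l)"
    unfolding touched_terms_def using assms disjoint_terms by auto
  moreover have "finite (touched_terms l - insert j U)"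
    unfolding touched_terms_def by auto
  moreover have "insert j A - U = (if j \<in> U then A - insert j U else insert j (A - insert j U))" for A
    by auto
  ultimately show ?thesis by simp
qed

text \<open>If some term \<open>j\<^sub>0\<close> is untouched, \<open>D\<close> can only determine \<open>F\<close> by revealing a satisfied term:
  otherwise setting \<open>T j\<^sub>0\<close> to ones, resp. all untouched terms to zeros, gives two inputs that agree
  with \<open>x\<close> on \<open>D\<close> but differ in \<open>F\<close>.\<close>

lemma determined_imp_term_sat:
  assumes U: "U \<subseteq> {..<m}" "D \<subseteq> (\<Union>j\<in>U. T j)" and j0: "j0 < m" "j0 \<notin> U"
    and x: "x \<in> cube n" "determined n F D x"
  shows "\<exists>j\<in>U. term_sat j x"
proof (rule ccontr)
  assume unsat: "\<not> (\<exists>j\<in>U. term_sat j x)"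
  have D_untouched: "i \<notin> T j" if "i \<in> D" "j < m" "j \<notin> U" for i j
    using U that disjoint_terms by blast
  define x1 where "x1 = (\<lambda>i. i \<in> T j0 \<or> x i)"
  define x0 where "x0 = (\<lambda>i. \<not> (\<exists>j<m. j \<notin> U \<and> i \<in> T j) \<and> x i)"
  have "x1 \<in> cube n" "x0 \<in> cube n"
    using x(1) term_subset[OF j0(1)] unfolding cube_def x1_def x0_def by auto
  moreover have "\<forall>i\<in>D. x1 i = x i" "\<forall>i\<in>D. x0 i = x i"
    using D_untouched j0 unfolding x1_def x0_def by auto
  ultimately have "F x1 = F x0"
    using x(2) unfolding determined_def by metis
  moreover have "F x1" unfolding read_once_dnf_def x1_def using j0 by auto
  moreover have "\<not> F x0"
  proof
    assume "F x0"
    then obtain j where j: "j < m" "\<forall>i\<in>T j. x0 i" unfolding read_once_dnf_def by blast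
    show False
    proof (cases "j \<in> U")
      case True
      hence "term_sat j x" using j unfolding term_sat_def x0_def by blast
      thus False using unsat True by blast
    next
      case False
      thus False using j term_nonempty[OF j(1)] unfolding x0_def by blast
    qed
  qed
  ultimately show False by blast
qed

lemma residual_cost_step:
  assumes r: "\<And>i. i < n \<Longrightarrow> 0 \<le> r i \<and> r i \<le> 1" and j: "j < m" and U: "U \<subseteq> {..<m}"
    and untouched: "j \<notin> U \<Longrightarrow> \<forall>i\<in>T j. r i = p i"
  shows "expect n r (no_term_sat U) * residual_cost U
    \<le> of_bool (j \<notin> U) + expect n r (no_term_sat (insert j U)) * residual_cost (insert j U)"
proof (cases "j \<in> U")
  case False
  let ?rest = "filter (\<lambda>j'. j' \<notin> U) greedy_order"
  have "filter (\<lambda>j'. j' \<notin> insert j U) xs = removeAll j (filter (\<lambda>j'. j' \<notin> U) xs)" for xs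
    by (induction xs) auto
  hence remove: "filter (\<lambda>j'. j' \<notin> insert j U) greedy_order = remove1 j ?rest"
    using distinct_greedy_order by (simp add: distinct_remove1_removeAll)
  have "residual_cost U \<le> 1 + (1 - term_prob j) * residual_cost (insert j U)"
    unfolding residual_cost_def remove
    by (rule order_cost_le_remove1)
      (use sorted_greedy_order set_greedy_order term_prob_bounds j False in
        \<open>auto intro: sorted_wrt_filter\<close>)
  hence "expect n r (no_term_sat U) * residual_cost U
      \<le> expect n r (no_term_sat U) * (1 + (1 - term_prob j) * residual_cost (insert j U))"
    using expect_no_term_sat_bounds[OF r] by (intro mult_left_mono) auto
  also have "\<dots> = expect n r (no_term_sat U) + expect n r (no_term_sat (insert j U)) * residual_cost (insert j U)"
    unfolding expect_no_term_sat_insert[OF j False U untouched[OF False]] by (simp add: algebra_simps)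
  also have "\<dots> \<le> 1 + expect n r (no_term_sat (insert j U)) * residual_cost (insert j U)"
    using expect_no_term_sat_bounds[OF r] by simp
  finally show ?thesis using False by simp
qed (simp add: insert_absorb)

lemma expect_no_term_sat_eq_0_if_determined:
  assumes U: "U \<subseteq> {..<m}" "U \<noteq> {..<m}" and D: "D \<subseteq> (\<Union>j\<in>U. T j)"
    and determined: "\<And>x. x \<in> cube n \<Longrightarrow> prob_input n r x \<noteq> 0 \<Longrightarrow> determined n F D x"
  shows "expect n r (no_term_sat U) = 0"
proof -
  obtain j0 where j0: "j0 < m" "j0 \<notin> U" using U by blast
  have "expect n r (no_term_sat U) = expect n r (\<lambda>_. 0)"
  proof (rule expect_cong_support)
    fix x assume "x \<in> cube n" "prob_input n r x \<noteq> 0"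
    thus "no_term_sat U x = 0"
      using determined_imp_term_sat[OF U(1) D j0] determined unfolding no_term_sat_def by auto
  qed
  thus ?thesis by (simp add: expect_const)
qed

lemma expect_touched_terms_Node:
  assumes "i < n"
  shows "expect n (r(i := of_bool b)) (\<lambda>x. real (card (touched_terms (tested (Node i t0 t1) x) - U)))
    = of_bool (term_of i \<notin> U) + expect n (r(i := of_bool b))
        (\<lambda>x. real (card (touched_terms (tested (if b then t1 else t0) x) - insert (term_of i) U)))"
proof -
  have "expect n (r(i := of_bool b)) (\<lambda>x. real (card (touched_terms (tested (Node i t0 t1) x) - U)))
      = expect n (r(i := of_bool b)) (\<lambda>x. of_bool (term_of i \<notin> U) +
          real (card (touched_terms (tested (if b then t1 else t0) x) - insert (term_of i) U)))"
  proof (rule expect_cong_support)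
    fix x assume "prob_input n (r(i := of_bool b)) x \<noteq> 0"
    hence "x i = b" using prob_input_cond_eq_0[OF assms] by blast
    thus "real (card (touched_terms (tested (Node i t0 t1) x) - U)) = of_bool (term_of i \<notin> U) +
        real (card (touched_terms (tested (if b then t1 else t0) x) - insert (term_of i) U))"
      using card_touched_terms_Cons[OF term_of[OF assms]] by simp
  qed
  thus ?thesis by (simp add: expect_add expect_const)
qed

text \<open>The tree is analysed under conditioned distributions \<open>r\<close>: the variables tested so far,
  collected in \<open>D\<close>, lie in the touched terms \<open>U\<close>, and outside of these terms \<open>r\<close> is still \<open>p\<close>.\<close>

lemma residual_cost_le_touched_terms:
  assumes "\<And>i. i < n \<Longrightarrow> 0 \<le> r i \<and> r i \<le> 1"
    and "\<And>j i. j < m \<Longrightarrow> j \<notin> U \<Longrightarrow> i \<in> T j \<Longrightarrow> r i = p i"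
    and "U \<subseteq> {..<m}" and "D \<subseteq> (\<Union>j\<in>U. T j)"
    and "\<And>x. x \<in> cube n \<Longrightarrow> prob_input n r x \<noteq> 0 \<Longrightarrow>
           set (tested t x) \<subseteq> {..<n} \<and> determined n F (D \<union> set (tested t x)) x"
  shows "expect n r (no_term_sat U) * residual_cost U
    \<le> expect n r (\<lambda>x. real (card (touched_terms (tested t x) - U)))"
  using assms
proof (induction t arbitrary: r U D)
  case Leaf
  show ?case
  proof (cases "U = {..<m}")
    case True
    hence "residual_cost U = 0" unfolding residual_cost_def using set_greedy_order by simp
    thus ?thesis by (simp add: touched_terms_def expect_const)
  next
    case False
    thus ?thesis using expect_no_term_sat_eq_0_if_determined[OF Leaf.prems(3) False Leaf.prems(4)]
      Leaf.prems(5) by (simp add: touched_terms_def expect_const)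
  qed
next
  case (Node i t0 t1)
  show ?case
  proof (cases "\<exists>x\<in>cube n. prob_input n r x \<noteq> 0")
    case False
    then show ?thesis by (simp add: expect_def)
  next
    case True
    then have i: "i < n" using Node.prems(5) by fastforce
    define j where "j = term_of i"
    have j: "j < m" "i \<in> T j" using term_of[OF i] j_def by auto
    let ?U = "insert j U"
    let ?G = "\<lambda>t U x. real (card (touched_terms (tested t x) - U))"
    let ?sub = "\<lambda>b. if b then t1 else t0"
    have branch: "w * (expect n (r(i := of_bool b)) (no_term_sat ?U) * residual_cost ?U)
        \<le> w * expect n (r(i := of_bool b)) (?G (?sub b) ?U)"
      if w: "w = (if b then r i else 1 - r i)" for b w
    proof (cases "w = 0")
      case False
      let ?r = "r(i := of_bool b)"
      have range: "\<And>i'. i' < n \<Longrightarrow> 0 \<le> ?r i' \<and> ?r i' \<le> 1" using Node.prems(1) by auto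
      have untouched: "?r i' = p i'" if "j' < m" "j' \<notin> ?U" "i' \<in> T j'" for j' i'
        using Node.prems(2)[OF that(1) _ that(3)] disjoint_terms[of j j'] that j by auto
      have valid: "set (tested (?sub b) x) \<subseteq> {..<n} \<and> determined n F (insert i D \<union> set (tested (?sub b) x)) x"
        if "x \<in> cube n" "prob_input n ?r x \<noteq> 0" for x
        using Node.prems(5)[OF that(1)] prob_input_cond_neq_0[OF i that(2)] w False by auto
      have UD: "?U \<subseteq> {..<m}" "insert i D \<subseteq> (\<Union>j\<in>?U. T j)" using Node.prems(3,4) j by auto
      have "expect n ?r (no_term_sat ?U) * residual_cost ?U \<le> expect n ?r (?G (?sub b) ?U)"
      proof (cases b)
        case True
        have "expect n ?r (no_term_sat ?U) * residual_cost ?U \<le> expect n ?r (?G t1 ?U)"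
          using Node.IH(2)[OF range untouched UD valid[unfolded if_P[OF True]]] .
        thus ?thesis using True by simp
      next
        case False
        have "expect n ?r (no_term_sat ?U) * residual_cost ?U \<le> expect n ?r (?G t0 ?U)"
          using Node.IH(1)[OF range untouched UD valid[unfolded if_not_P[OF False]]] .
        thus ?thesis using False by simp
      qed
      thus ?thesis using Node.prems(1)[OF i] w by (intro mult_left_mono) auto
    qed simp
    have cond: "expect n (r(i := of_bool b)) (?G (Node i t0 t1) U)
        = of_bool (j \<notin> U) + expect n (r(i := of_bool b)) (?G (?sub b) ?U)" for b
      unfolding j_def by (rule expect_touched_terms_Node[OF i])
    have "expect n r (no_term_sat U) * residual_cost U
        \<le> of_bool (j \<notin> U) + expect n r (no_term_sat ?U) * residual_cost ?U"
      by (rule residual_cost_step) (use Node.prems j in auto)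
    also have "\<dots> = of_bool (j \<notin> U)
        + r i * (expect n (r(i := of_bool True)) (no_term_sat ?U) * residual_cost ?U)
        + (1 - r i) * (expect n (r(i := of_bool False)) (no_term_sat ?U) * residual_cost ?U)"
      unfolding expect_split[OF i, of r "no_term_sat ?U"] by (simp add: algebra_simps)
    also have "\<dots> \<le> of_bool (j \<notin> U) + r i * expect n (r(i := of_bool True)) (?G t1 ?U)
        + (1 - r i) * expect n (r(i := of_bool False)) (?G t0 ?U)"
      using branch[of _ True] branch[of _ False] by fastforce
    also have "\<dots> = expect n r (?G (Node i t0 t1) U)"
      using expect_split[OF i, of r "?G (Node i t0 t1) U"] cond[of True] cond[of False]
      by (simp add: algebra_simps)
    finally show ?thesis .
  qed
qed

lemma order_cost_le_tree_cost:
  assumes "valid_tree n F t"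
  shows "order_cost term_prob greedy_order \<le> tree_cost n (\<lambda>_. 1) p t"
proof -
  have "order_cost term_prob greedy_order = expect n p (no_term_sat {}) * residual_cost {}"
    by (simp add: residual_cost_def no_term_sat_empty expect_1)
  also have "\<dots> \<le> expect n p (\<lambda>x. real (card (touched_terms (tested t x) - {})))"
    by (rule residual_cost_le_touched_terms) (use p_bounds assms in \<open>auto simp: valid_tree_def\<close>)
  also have "\<dots> \<le> expect n p (\<lambda>x. real (length (tested t x)))"
    by (rule expect_mono[OF p_bounds])
      (use assms card_touched_terms_le in \<open>auto simp: valid_tree_def\<close>)
  also have "\<dots> = tree_cost n (\<lambda>_. 1) p t"
    by (simp add: tree_cost_def expect_def sum_list_triv)
  finally show ?thesis .
qed

lemma expect_search_length:
  assumes "distinct xs" "set xs \<subseteq> {..<m}" "set xs \<inter> U = {}" "U \<subseteq> {..<m}"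
  shows "expect n p (\<lambda>x. no_term_sat U x * real (search_length (\<lambda>j. term_sat j x) xs))
    = expect n p (no_term_sat U) * order_cost term_prob xs"
  using assms
proof (induction xs arbitrary: U)
  case (Cons a xs)
  have a: "a < m" "a \<notin> U" using Cons.prems by auto
  have "expect n p (\<lambda>x. no_term_sat U x * real (search_length (\<lambda>j. term_sat j x) (a # xs)))
      = expect n p (\<lambda>x. no_term_sat U x + no_term_sat (insert a U) x * real (search_length (\<lambda>j. term_sat j x) xs))"
    by (rule arg_cong[where f="expect n p"]) (auto simp: no_term_sat_def)
  also have "\<dots> = expect n p (no_term_sat U) + expect n p (no_term_sat (insert a U)) * order_cost term_prob xs"
    unfolding expect_add using Cons by simp
  also have "expect n p (no_term_sat (insert a U)) = (1 - term_prob a) * expect n p (no_term_sat U)"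
    by (rule expect_no_term_sat_insert[OF a Cons.prems(4)]) simp
  finally show ?case by (simp add: algebra_simps)
qed (simp add: expect_const)

definition greedy_perm :: "nat list" where
  "greedy_perm = concat (map (\<lambda>j. sorted_list_of_set (T j)) greedy_order)"

lemma length_sorted_list_of_term: "j \<in> set greedy_order \<Longrightarrow> length (sorted_list_of_set (T j)) = k"
  using set_greedy_order card_term by simp

lemma set_greedy_perm: "set greedy_perm = {..<n}"
  unfolding greedy_perm_def using set_greedy_order finite_term Union_terms by auto

lemma is_perm_greedy_perm: "is_perm n greedy_perm"
proof -
  have "length greedy_perm = (\<Sum>j\<leftarrow>greedy_order. k)"
    unfolding greedy_perm_def length_concat map_map
    by (intro arg_cong[where f=sum_list] map_cong) (simp_all add: set_greedy_order card_term)
  also have "\<dots> = n" by (simp add: sum_list_triv length_greedy_order n_eq)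
  finally show ?thesis
    unfolding is_perm_def using set_greedy_perm by (simp add: card_distinct)
qed

lemma stop_time_greedy_perm_le:
  assumes x: "x \<in> cube n"
  shows "stop_time n F greedy_perm x \<le> k * search_length (\<lambda>j. term_sat j x) greedy_order"
proof -
  let ?s = "search_length (\<lambda>j. term_sat j x) greedy_order"
  let ?tested = "set (take (k * ?s) greedy_perm)"
  have tested: "?tested = (\<Union>j\<in>set (take ?s greedy_order). T j)"
  proof -
    have "take (k * ?s) greedy_perm = concat (map (\<lambda>j. sorted_list_of_set (T j)) (take ?s greedy_order))"
      unfolding greedy_perm_def by (rule take_mult_concat_map) (rule length_sorted_list_of_term)
    moreover have "set (sorted_list_of_set (T j)) = T j" if "j \<in> set (take ?s greedy_order)" for j
    proof -
      have "j < m" using in_set_takeD[OF that] set_greedy_order by blast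
      thus ?thesis by (simp add: finite_term)
    qed
    ultimately show ?thesis by simp
  qed
  have "determined n F ?tested x"
  proof (cases "\<exists>j\<in>set (take ?s greedy_order). term_sat j x")
    case True
    then obtain j where j: "j \<in> set (take ?s greedy_order)" "term_sat j x" by blast
    hence "j < m" using set_greedy_order by (auto dest: in_set_takeD)
    moreover have "T j \<subseteq> ?tested" unfolding tested using j(1) by auto
    ultimately show ?thesis
      using j(2) unfolding determined_def read_once_dnf_def term_sat_def by blast
  next
    case False
    hence "?s = m" using search_length_found[of _ greedy_order] length_greedy_order by metis
    hence "?tested = {..<n}" using is_perm_greedy_perm n_eq
      by (simp add: is_perm_def mult.commute distinct_card[symmetric])
    thus ?thesis unfolding determined_def using cube_eqI[OF x] by auto
  qed
  thus ?thesis unfolding stop_time_def by (rule Least_le)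
qed

lemma perm_cost_greedy_perm_le:
  "perm_cost n F (\<lambda>_. 1) p greedy_perm \<le> real k * order_cost term_prob greedy_order"
proof -
  have "perm_cost n F (\<lambda>_. 1) p greedy_perm
      = expect n p (\<lambda>x. real (length (take (stop_time n F greedy_perm x) greedy_perm)))"
    by (simp add: perm_cost_def expect_def sum_list_triv)
  also have "\<dots> \<le> expect n p (\<lambda>x. real k * (no_term_sat {} x * real (search_length (\<lambda>j. term_sat j x) greedy_order)))"
    by (rule expect_mono[OF p_bounds])
      (use stop_time_greedy_perm_le in \<open>auto simp: no_term_sat_empty min_le_iff_disj simp flip: of_nat_mult\<close>)
  also have "\<dots> = real k * order_cost term_prob greedy_order"
    unfolding expect_cmult
    using expect_search_length[OF distinct_greedy_order, of "{}"] set_greedy_order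
    by (simp add: no_term_sat_empty expect_1)
  finally show ?thesis .
qed

theorem greedy_perm_approximation:
  "perm_cost n F (\<lambda>_. 1) p greedy_perm \<le> real k * OPT_A n F (\<lambda>_. 1) p"
proof -
  have "order_cost term_prob greedy_order \<le> OPT_A n F (\<lambda>_. 1) p"
    unfolding OPT_A_def
    by (rule cInf_greatest) (use valid_tree_exists[of n F] order_cost_le_tree_cost in auto)
  hence "real k * order_cost term_prob greedy_order \<le> real k * OPT_A n F (\<lambda>_. 1) p"
    by (rule mult_left_mono) simp
  thus ?thesis using perm_cost_greedy_perm_le by linarith
qed

end

theorem lemma1:
  fixes n m k :: nat and T :: "nat \<Rightarrow> nat set" and p :: "nat \<Rightarrow> real"
  assumes "m > 0" and "n = m * k"
    and "\<And>j. j < m \<Longrightarrow> card (T j) = k"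
    and "\<And>j j'. j < m \<Longrightarrow> j' < m \<Longrightarrow> j \<noteq> j' \<Longrightarrow> T j \<inter> T j' = {}"
    and "(\<Union>j<m. T j) = {..<n}"
    and "\<And>i. i < n \<Longrightarrow> 0 < p i \<and> p i < 1"
  shows "\<exists>\<sigma>. is_perm n \<sigma> \<and>
           perm_cost n (read_once_dnf n m T) (\<lambda>_. 1) p \<sigma>
             \<le> real k * OPT_A n (read_once_dnf n m T) (\<lambda>_. 1) p"
proof (cases "k = 0")
  case True
  hence "n = 0" using assms(2) by simp
  thus ?thesis using True by (intro exI[of _ "[]"]) (simp add: is_perm_def perm_cost_def)
next
  case False
  then interpret uniform_read_once_dnf n m k T p
    using assms by unfold_locales (auto simp: less_imp_le)
  show ?thesis using is_perm_greedy_perm greedy_perm_approximation by blast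
qed

end
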